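(* Let $n\ge1$. The map $\mathrm{GDes}\colon\mathfrak{S}_n\to\mathcal{Q}_n$ is order preserving, and for all $u\in\mathfrak{S}_n$ and $J\subseteq[n-1]$, $$\zeta_J\le u\iff J\subseteq\mathrm{GDes}(u).$$ That is, $(Z,\mathrm{GDes})$ with $Z(J)=\zeta_J$ is a Galois connection $\mathcal{Q}_n\rightleftarrows\mathfrak{S}_n$.
   Context: $\mathcal{Q}_n$ is the Boolean poset of subsets of $[n-1]$ ordered by inclusion. $\mathfrak{S}_n$ carries the weak order: $u\le v$ iff $\mathrm{Inv}(u)\subseteq\mathrm{Inv}(v)$, $\mathrm{Inv}(u)=\{(i,j):i<j,\ u_i>u_j\}$ (one-line notation). A permutation $u\in\mathfrak{S}_n$ has a global descent at $p\in[n-1]$ if $u_i>u_j$ for all $i\le p<j$ (equivalently $\{u_1,\ldots,u_p\}=\{n-p+1,\ldots,n\}$); $\mathrm{GDes}(u)$ is the set of global descents. For $J=\{p_1<\cdots<p_k\}\subseteq[n-1]$, $\zeta_J=(n{-}p_1{+}1,\ldots,n,\ n{-}p_2{+}1,\ldots,n{-}p_1,\ \ldots,\ 1,\ldots,n{-}p_k)$, and $\zeta_\emptyset=1_n$. *)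

theory Defs
  imports "HOL-Combinatorics.Permutations"
begin

text \<open>Permutations of [n] are functions nat => nat that permute {1..n} (identity elsewhere),
  read in one-line notation u = (u 1, ..., u n).\<close>

definition Inv :: "nat \<Rightarrow> (nat \<Rightarrow> nat) \<Rightarrow> (nat \<times> nat) set" where
  "Inv n u = {(i, j). 1 \<le> i \<and> i < j \<and> j \<le> n \<and> u i > u j}"

definition weak_le :: "nat \<Rightarrow> (nat \<Rightarrow> nat) \<Rightarrow> (nat \<Rightarrow> nat) \<Rightarrow> bool" where
  "weak_le n u v \<longleftrightarrow> Inv n u \<subseteq> Inv n v"

definition GDes :: "nat \<Rightarrow> (nat \<Rightarrow> nat) \<Rightarrow> nat set" where
  "GDes n u = {p \<in> {1..n-1}. \<forall>i j. 1 \<le> i \<and> i \<le> p \<and> p < j \<and> j \<le> n \<longrightarrow> u i > u j}"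

text \<open>zeta_J: for J = {p_1 < ... < p_k} (with p_0 = 0, p_(k+1) = n), positions
  p_(m-1)+1..p_m carry the values n-p_m+1, ..., n-p_(m-1) in increasing order.\<close>
definition zeta :: "nat \<Rightarrow> nat set \<Rightarrow> nat \<Rightarrow> nat" where
  "zeta n J i = (if 1 \<le> i \<and> i \<le> n then
      (let a = Max {p \<in> insert 0 J. p < i}; b = Min {p \<in> insert n J. i \<le> p}
       in n - b + (i - a))
    else i)"

end

theory Submission
  imports Defs
begin

text \<open>A position p is a global descent of u exactly when every pair straddling p is an
  inversion of u, and the inversions of \<open>\<zeta>\<^sub>J\<close> are precisely the pairs straddling some p \<in> J.
  Hence \<open>Inv \<zeta>\<^sub>J \<subseteq> Inv u\<close> says J \<subseteq> GDes u, and monotonicity of GDes is immediate.\<close>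

definition straddling_pairs :: "nat \<Rightarrow> nat \<Rightarrow> (nat \<times> nat) set" where
  "straddling_pairs n p = {(i, j). 1 \<le> i \<and> i \<le> p \<and> p < j \<and> j \<le> n}"

lemma GDes_iff_straddling_pairs_subset_Inv:
  "p \<in> GDes n u \<longleftrightarrow> p \<in> {1..n-1} \<and> straddling_pairs n p \<subseteq> Inv n u"
  unfolding GDes_def straddling_pairs_def Inv_def by auto

lemma GDes_mono:
  assumes "weak_le n u v"
  shows "GDes n u \<subseteq> GDes n v"
proof
  fix p
  assume "p \<in> GDes n u"
  with assms show "p \<in> GDes n v"
    unfolding weak_le_def GDes_iff_straddling_pairs_subset_Inv by blast
qed

text \<open>Position i lies in the block \<open>prev_cut J i < i \<le> next_cut n J i\<close> cut out by
  \<open>{0} \<union> J \<union> {n}\<close> (the a and b of the definition of zeta); \<open>\<zeta>\<^sub>J\<close> increases within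
  a block and every earlier block carries larger values.\<close>

definition prev_cut :: "nat set \<Rightarrow> nat \<Rightarrow> nat" where
  "prev_cut J i = Max {p \<in> insert 0 J. p < i}"

definition next_cut :: "nat \<Rightarrow> nat set \<Rightarrow> nat \<Rightarrow> nat" where
  "next_cut n J i = Min {p \<in> insert n J. i \<le> p}"

lemma zeta_eq_cuts:
  assumes "1 \<le> i" "i \<le> n"
  shows "zeta n J i = n - next_cut n J i + (i - prev_cut J i)"
  using assms unfolding zeta_def prev_cut_def next_cut_def by (simp add: Let_def)

lemma prev_cut_less:
  assumes "finite J" "1 \<le> i"
  shows "prev_cut J i < i"
proof -
  have "{p \<in> insert 0 J. p < i} \<noteq> {}" using assms(2) by auto
  from Max_in[OF _ this] show ?thesis using assms(1) unfolding prev_cut_def by auto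
qed

lemma prev_cut_in:
  assumes "finite J" "1 \<le> i"
  shows "prev_cut J i \<in> insert 0 J"
proof -
  have "{p \<in> insert 0 J. p < i} \<noteq> {}" using assms(2) by auto
  from Max_in[OF _ this] show ?thesis using assms(1) unfolding prev_cut_def by auto
qed

lemma prev_cut_greatest:
  assumes "finite J" "p \<in> insert 0 J" "p < i"
  shows "p \<le> prev_cut J i"
  unfolding prev_cut_def using assms by (intro Max_ge) auto

lemma next_cut_ge:
  assumes "finite J" "i \<le> n"
  shows "i \<le> next_cut n J i"
proof -
  have "{p \<in> insert n J. i \<le> p} \<noteq> {}" using assms(2) by auto
  from Min_in[OF _ this] show ?thesis using assms(1) unfolding next_cut_def by auto
qed

lemma next_cut_in:
  assumes "finite J" "i \<le> n"
  shows "next_cut n J i \<in> insert n J"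
proof -
  have "{p \<in> insert n J. i \<le> p} \<noteq> {}" using assms(2) by auto
  from Min_in[OF _ this] show ?thesis using assms(1) unfolding next_cut_def by auto
qed

lemma next_cut_least:
  assumes "finite J" "p \<in> insert n J" "i \<le> p"
  shows "next_cut n J i \<le> p"
  unfolding next_cut_def using assms by (intro Min_le) auto

lemma next_cut_le:
  assumes "finite J" "i \<le> n"
  shows "next_cut n J i \<le> n"
  using next_cut_least[OF assms(1) _ assms(2)] by simp

lemma cuts_eq_if_no_cut_between:
  assumes "finite J" "1 \<le> i" "i \<le> j" "j \<le> n" "\<forall>p\<in>J. \<not> (i \<le> p \<and> p < j)"
  shows "prev_cut J j = prev_cut J i" "next_cut n J i = next_cut n J j"
proof -
  have "prev_cut J j < i"
    using prev_cut_in[of J j] prev_cut_less[of J j] assms by force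
  then have "prev_cut J j \<le> prev_cut J i"
    using prev_cut_greatest prev_cut_in[of J j] assms by simp
  moreover have "prev_cut J i \<le> prev_cut J j"
    using prev_cut_greatest prev_cut_in[of J i] prev_cut_less[of J i] assms by simp
  ultimately show "prev_cut J j = prev_cut J i" by simp
  have "j \<le> next_cut n J i"
    using next_cut_in[of J i n] next_cut_ge[of J i n] assms by force
  then have "next_cut n J j \<le> next_cut n J i"
    using next_cut_least next_cut_in[of J i n] assms by simp
  moreover have "next_cut n J i \<le> next_cut n J j"
    using next_cut_least next_cut_in[of J j n] next_cut_ge[of J j n] assms by simp
  ultimately show "next_cut n J i = next_cut n J j" by simp
qed

lemma zeta_inversion_iff:
  assumes "finite J" "1 \<le> i" "i < j" "j \<le> n"
  shows "zeta n J j < zeta n J i \<longleftrightarrow> (\<exists>p\<in>J. i \<le> p \<and> p < j)"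
proof -
  have zeta_i: "zeta n J i = n - next_cut n J i + (i - prev_cut J i)"
    and zeta_j: "zeta n J j = n - next_cut n J j + (j - prev_cut J j)"
    using assms by (simp_all add: zeta_eq_cuts)
  have cuts: "prev_cut J i < i" "prev_cut J j < j" "j \<le> next_cut n J j"
    "next_cut n J i \<le> n" "next_cut n J j \<le> n"
    using prev_cut_less next_cut_ge next_cut_le assms by auto
  show ?thesis
  proof
    assume "\<exists>p\<in>J. i \<le> p \<and> p < j"
    then obtain p where p: "p \<in> J" "i \<le> p" "p < j" by blast
    have "next_cut n J i \<le> p" "p \<le> prev_cut J j"
      using next_cut_least prev_cut_greatest assms p by auto
    with zeta_i zeta_j cuts show "zeta n J j < zeta n J i" by linarith
  next
    assume inv: "zeta n J j < zeta n J i"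
    show "\<exists>p\<in>J. i \<le> p \<and> p < j"
    proof (rule ccontr)
      assume "\<not> ?thesis"
      then have "prev_cut J j = prev_cut J i" "next_cut n J i = next_cut n J j"
        using cuts_eq_if_no_cut_between[of J i j n] assms by auto
      with inv zeta_i zeta_j cuts assms show False by linarith
    qed
  qed
qed

lemma Inv_zeta:
  assumes "finite J"
  shows "Inv n (zeta n J) = (\<Union>p\<in>J. straddling_pairs n p)"
proof -
  have "(i, j) \<in> Inv n (zeta n J) \<longleftrightarrow> (i, j) \<in> (\<Union>p\<in>J. straddling_pairs n p)" for i j
  proof (cases "1 \<le> i \<and> i < j \<and> j \<le> n")
    case True
    then show ?thesis
      using zeta_inversion_iff[OF assms, of i j n] unfolding Inv_def straddling_pairs_def by auto
  next
    case False
    then show ?thesis unfolding Inv_def straddling_pairs_def by auto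
  qed
  then show ?thesis by (simp add: set_eq_iff split_paired_all)
qed

lemma weak_le_zeta_iff:
  assumes "J \<subseteq> {1..n-1}"
  shows "weak_le n (zeta n J) u \<longleftrightarrow> J \<subseteq> GDes n u"
proof -
  have "finite J" using assms finite_subset by blast
  then have "weak_le n (zeta n J) u \<longleftrightarrow> (\<forall>p\<in>J. straddling_pairs n p \<subseteq> Inv n u)"
    by (simp add: weak_le_def Inv_zeta UN_subset_iff)
  also have "\<dots> \<longleftrightarrow> J \<subseteq> GDes n u"
    using assms GDes_iff_straddling_pairs_subset_Inv by blast
  finally show ?thesis .
qed

theorem mainTheorem4:
  fixes n :: nat
  assumes "n \<ge> 1"
  shows "(\<forall>u v. u permutes {1..n} \<longrightarrow> v permutes {1..n} \<longrightarrow> weak_le n u v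
            \<longrightarrow> GDes n u \<subseteq> GDes n v)
       \<and> (\<forall>u J. u permutes {1..n} \<longrightarrow> J \<subseteq> {1..n-1} \<longrightarrow>
            (weak_le n (zeta n J) u \<longleftrightarrow> J \<subseteq> GDes n u))"
  by (simp add: GDes_mono weak_le_zeta_iff)

end
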